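(* For all $d,k,N\in\mathbb{N}$, all $\mathbf{x}\in\mathcal{G}_{d,k}$ and all $u\in\mathbb{N}^N$ with $u_1+\dots+u_N\in N\mathbb{Z}$, $$\mathsf{bary}(\mathbf{x}^{u_1},\dots,\mathbf{x}^{u_N})=\mathbf{x}^{(u_1+\dots+u_N)/N}.$$
   Context: $T_{d,k}=\bigoplus_{\ell=0}^k(\mathbb{R}^d)^{\otimes\ell}$ is the truncated tensor algebra with product the bilinear extension of the tensor product of levels, set to $0$ when the total level exceeds $k$. $\mathfrak{g}_{d,k}$ is the smallest Lie subalgebra (commutator bracket) of $T_{d,k}$ containing $e_1,\dots,e_d\in\mathbb{R}^d$; $\exp(\mathbf{z})=\sum_{\ell=0}^k\mathbf{z}^{\otimes\ell}/\ell!$; $\mathcal{G}_{d,k}=\exp(\mathfrak{g}_{d,k})$, a group under the product of $T_{d,k}$ (powers $\mathbf{x}^n$ are group powers), with $\log=\exp^{-1}$, $\log(\mathbf{s})=\sum_{\ell\ge1}\frac{(-1)^{\ell+1}}{\ell}(\mathbf{s}-1)^{\otimes\ell}$. For $\mathbf{x}\in\mathcal{G}_{d,k}^N$, $\mathsf{bary}(\mathbf{x})$ is the unique $\mathbf{m}\in\mathcal{G}_{d,k}$ with $\sum_{i=1}^N\log(\mathbf{m}^{-1}\mathbf{x}_i)=0$. *)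

theory Defs
  imports Complex_Main
begin

text \<open>Truncated tensor algebra T_{d,k}: an element is a real-valued coefficient
function on words (lists of letters i < d) of length at most k; the word
w = [i1,...,il] stands for the basis tensor e_i1 (x) ... (x) e_il of level l.\<close>

type_synonym tensor = "nat list \<Rightarrow> real"

definition in_T :: "nat \<Rightarrow> nat \<Rightarrow> tensor \<Rightarrow> bool" where
  "in_T d k a \<longleftrightarrow> (\<forall>w. a w \<noteq> 0 \<longrightarrow> length w \<le> k \<and> set w \<subseteq> {..<d})"

definition tone :: tensor where
  "tone w = (if w = [] then 1 else 0)"

definition tletter :: "nat \<Rightarrow> nat \<Rightarrow> tensor" where
  "tletter k i w = (if w = [i] \<and> 1 \<le> k then 1 else 0)"

definition tmul :: "nat \<Rightarrow> tensor \<Rightarrow> tensor \<Rightarrow> tensor" where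
  "tmul k a b w = (if length w \<le> k
      then (\<Sum>i\<le>length w. a (take i w) * b (drop i w)) else 0)"

definition tbracket :: "nat \<Rightarrow> tensor \<Rightarrow> tensor \<Rightarrow> tensor" where
  "tbracket k a b = (\<lambda>w. tmul k a b w - tmul k b a w)"

definition tpow :: "nat \<Rightarrow> tensor \<Rightarrow> nat \<Rightarrow> tensor" where
  "tpow k a n = ((tmul k a) ^^ n) tone"

definition texp :: "nat \<Rightarrow> tensor \<Rightarrow> tensor" where
  "texp k z = (\<lambda>w. \<Sum>l\<le>k. (1 / fact l) * tpow k z l w)"

definition tlog :: "nat \<Rightarrow> tensor \<Rightarrow> tensor" where
  "tlog k s = (\<lambda>w. \<Sum>l\<in>{1..k}. ((-1) ^ (l + 1) / real l) * tpow k (\<lambda>v. s v - tone v) l w)"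

text \<open>The free step-k nilpotent Lie algebra g_{d,k}: the smallest Lie subalgebra
(subspace closed under commutator bracket) of T_{d,k} containing e_1..e_d.\<close>
inductive_set lie_alg :: "nat \<Rightarrow> nat \<Rightarrow> tensor set" for d k where
  gen: "i < d \<Longrightarrow> tletter k i \<in> lie_alg d k"
| zero: "(\<lambda>w. 0) \<in> lie_alg d k"
| add: "a \<in> lie_alg d k \<Longrightarrow> b \<in> lie_alg d k \<Longrightarrow> (\<lambda>w. a w + b w) \<in> lie_alg d k"
| smult: "a \<in> lie_alg d k \<Longrightarrow> (\<lambda>w. c * a w) \<in> lie_alg d k"
| bracket: "a \<in> lie_alg d k \<Longrightarrow> b \<in> lie_alg d k \<Longrightarrow> tbracket k a b \<in> lie_alg d k"

definition lie_group :: "nat \<Rightarrow> nat \<Rightarrow> tensor set" where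
  "lie_group d k = texp k ` lie_alg d k"

definition ginv :: "nat \<Rightarrow> nat \<Rightarrow> tensor \<Rightarrow> tensor" where
  "ginv d k x = (THE y. y \<in> lie_group d k \<and> tmul k x y = tone)"

definition bary :: "nat \<Rightarrow> nat \<Rightarrow> nat \<Rightarrow> (nat \<Rightarrow> tensor) \<Rightarrow> tensor" where
  "bary d k N x = (THE m. m \<in> lie_group d k \<and>
      (\<forall>w. (\<Sum>i<N. tlog k (tmul k (ginv d k m) (x i)) w) = 0))"

end

theory Submission
  imports Defs "HOL-Computational_Algebra.Formal_Power_Series"
begin

text \<open>Write x = texp z with z in the Lie algebra. Having no scalar part, z is nilpotent in the
  truncated algebra, so evaluating formal power series at z is a ring homomorphism. Hence
  x^n = exp (n z), the inverse of x^q is exp (-q z), and log ((x^q)^-1 x^u) = (u - q) z; these sum to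
  zero when N q = u_1 + ... + u_N. For uniqueness, compare two solutions m, m' level by level:
  if they agree below some level, then on that level products, inverses and log act on the
  difference to first order only, so the two barycentre equations differ there by N (m' - m).\<close>

definition vanishes_above :: "nat \<Rightarrow> tensor \<Rightarrow> bool" where
  "vanishes_above k a \<longleftrightarrow> (\<forall>w. k < length w \<longrightarrow> a w = 0)"

definition agree_below :: "nat \<Rightarrow> tensor \<Rightarrow> tensor \<Rightarrow> bool" where
  "agree_below n a b \<longleftrightarrow> (\<forall>v. length v < n \<longrightarrow> a v = b v)"

lemma agree_below_refl [simp]: "agree_below n a a"
  by (simp add: agree_below_def)

lemma agree_below_mono: "agree_below n a b \<Longrightarrow> m \<le> n \<Longrightarrow> agree_below m a b"
  by (simp add: agree_below_def)

lemma agree_below_by_level: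
  assumes "\<And>v. length v < n \<Longrightarrow> agree_below (length v) a b \<Longrightarrow> a v = b v"
  shows "agree_below n a b"
proof -
  have "agree_below m a b" if "m \<le> n" for m
    using that
  proof (induction m)
    case (Suc m)
    then have IH: "agree_below m a b" by simp
    have "a v = b v" if "length v = m" for v
      using assms[of v] IH Suc.prems that by simp
    then show ?case
      using IH by (auto simp: agree_below_def less_Suc_eq)
  qed (simp add: agree_below_def)
  then show ?thesis by simp
qed

lemma tensor_eq_by_level:
  assumes "\<And>v. agree_below (length v) a b \<Longrightarrow> a v = b v"
  shows "a = b"
proof
  fix v :: "nat list"
  have "agree_below (Suc (length v)) a b"
    using assms by (intro agree_below_by_level)
  then show "a v = b v" by (simp add: agree_below_def)
qed

lemma tmul_Nil [simp]: "tmul k a b [] = a [] * b []"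
  by (simp add: tmul_def)

lemma tmul_eq_0_above: "k < length w \<Longrightarrow> tmul k a b w = 0"
  by (simp add: tmul_def)

lemma vanishes_above_tmul [simp]: "vanishes_above k (tmul k a b)"
  by (simp add: vanishes_above_def tmul_eq_0_above)

lemma vanishes_above_tone [simp]: "vanishes_above k tone"
  by (simp add: vanishes_above_def tone_def)

lemma tmul_tone_left:
  assumes "vanishes_above k b"
  shows "tmul k tone b = b"
proof
  fix w
  have "(\<Sum>i\<le>length w. tone (take i w) * b (drop i w)) = (\<Sum>i\<le>length w. if i = 0 then b w else 0)"
    by (rule sum.cong) (auto simp: tone_def)
  then show "tmul k tone b w = b w"
    using assms by (simp add: tmul_def vanishes_above_def)
qed

lemma tmul_tone_right:
  assumes "vanishes_above k a"
  shows "tmul k a tone = a"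
proof
  fix w
  have "(\<Sum>i\<le>length w. a (take i w) * tone (drop i w)) =
      (\<Sum>i\<le>length w. if i = length w then a w else 0)"
    by (rule sum.cong) (auto simp: tone_def)
  then show "tmul k a tone w = a w"
    using assms by (simp add: tmul_def vanishes_above_def)
qed

lemma sum_atMost_atLeastAtMost_swap:
  "(\<Sum>i\<le>n. \<Sum>j\<in>{i..n}. f i j) = (\<Sum>j\<le>n::nat. \<Sum>i\<le>j. f i j)"
proof -
  have "(\<Sum>i\<le>n. \<Sum>j\<in>{i..n}. f i j) = (\<Sum>i\<le>n. sum (f i) {j. j \<in> {..n} \<and> i \<le> j})"
    by (intro sum.cong) auto
  also have "\<dots> = (\<Sum>j\<le>n. \<Sum>i\<in>{i. i \<in> {..n} \<and> i \<le> j}. f i j)"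
    by (rule sum.swap_restrict) simp_all
  also have "\<dots> = (\<Sum>j\<le>n. \<Sum>i\<le>j. f i j)"
    by (intro sum.cong) auto
  finally show ?thesis .
qed

lemma tmul_assoc: "tmul k a (tmul k b c) = tmul k (tmul k a b) c"
proof
  fix w
  show "tmul k a (tmul k b c) w = tmul k (tmul k a b) c w"
  proof (cases "length w \<le> k")
    case False
    then show ?thesis by (simp add: tmul_def)
  next
    case True
    let ?n = "length w"
    define f where "f i j = a (take i w) * b (drop i (take j w)) * c (drop j w)" for i j
    have "tmul k a (tmul k b c) w = (\<Sum>i\<le>?n. \<Sum>l\<le>?n - i. f i (i + l))"
      using True unfolding tmul_def f_def
      by (auto simp: sum_distrib_left take_drop drop_drop add.commute mult.assoc intro!: sum.cong)
    also have "\<dots> = (\<Sum>i\<le>?n. \<Sum>j\<in>{i..?n}. f i j)"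
    proof (rule sum.cong[OF refl])
      fix i
      assume "i \<in> {..?n}"
      then show "(\<Sum>l\<le>?n - i. f i (i + l)) = (\<Sum>j\<in>{i..?n}. f i j)"
        by (intro sum.reindex_bij_witness[of _ "\<lambda>j. j - i" "\<lambda>l. i + l"]) auto
    qed
    also have "\<dots> = (\<Sum>j\<le>?n. \<Sum>i\<le>j. f i j)"
      by (rule sum_atMost_atLeastAtMost_swap)
    also have "\<dots> = tmul k (tmul k a b) c w"
      using True unfolding tmul_def f_def
      by (auto simp: sum_distrib_right min_def intro!: sum.cong)
    finally show ?thesis .
  qed
qed

lemma tmul_sum_left: "tmul k (\<lambda>w. \<Sum>j\<in>A. f j w) b = (\<lambda>w. \<Sum>j\<in>A. tmul k (f j) b w)"
  unfolding tmul_def by (rule ext) (simp add: sum_distrib_right sum.swap[of _ _ A])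

lemma tmul_sum_right: "tmul k a (\<lambda>w. \<Sum>j\<in>A. f j w) = (\<lambda>w. \<Sum>j\<in>A. tmul k a (f j) w)"
  unfolding tmul_def by (rule ext) (simp add: sum_distrib_left sum.swap[of _ _ A])

lemma tmul_scale_left: "tmul k (\<lambda>w. c * a w) b = (\<lambda>w. c * tmul k a b w)"
  unfolding tmul_def by (auto simp: sum_distrib_left mult.assoc)

lemma tmul_scale_right: "tmul k a (\<lambda>w. c * b w) = (\<lambda>w. c * tmul k a b w)"
  unfolding tmul_def by (auto simp: sum_distrib_left mult_ac)

lemma tpow_0 [simp]: "tpow k a 0 = tone"
  by (simp add: tpow_def)

lemma tpow_Suc: "tpow k a (Suc n) = tmul k a (tpow k a n)"
  by (simp add: tpow_def)

lemma vanishes_above_tpow [simp]: "vanishes_above k (tpow k a n)"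
  by (cases n) (simp_all add: tpow_Suc)

lemma tpow_add: "tpow k a (m + n) = tmul k (tpow k a m) (tpow k a n)"
  by (induction m) (simp_all add: tpow_Suc tmul_tone_left tmul_assoc)

lemma tpow_scale: "tpow k (\<lambda>w. c * a w) n = (\<lambda>w. c ^ n * tpow k a n w)"
  by (induction n) (simp_all add: tpow_Suc tmul_scale_left tmul_scale_right mult_ac)

lemma tpow_Nil: "tpow k a n [] = a [] ^ n"
  by (induction n) (simp_all add: tpow_Suc tone_def)

lemma tpow_eq_0_below:
  assumes "a [] = 0"
  shows "length w < n \<Longrightarrow> tpow k a n w = 0"
proof (induction n arbitrary: w)
  case (Suc n)
  have "a (take i w) * tpow k a n (drop i w) = 0" if "i \<le> length w" for i
  proof (cases "i = 0")
    case True
    then show ?thesis using assms by simp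
  next
    case False
    then have "length (drop i w) < n" using Suc.prems that by simp
    then show ?thesis using Suc.IH by simp
  qed
  then show ?case by (simp add: tpow_Suc tmul_def del: mult_eq_0_iff)
qed simp

lemma tpow_eq_0_nilpotent:
  assumes "a [] = 0" "k < n"
  shows "tpow k a n w = 0"
proof (cases "k < length w")
  case True
  then show ?thesis using vanishes_above_tpow[of k a n] by (simp add: vanishes_above_def)
next
  case False
  then show ?thesis using assms by (intro tpow_eq_0_below) auto
qed

definition fps_at :: "nat \<Rightarrow> tensor \<Rightarrow> real fps \<Rightarrow> tensor" where
  "fps_at k y f = (\<lambda>w. \<Sum>j\<le>k. fps_nth f j * tpow k y j w)"

lemma fps_at_cong:
  "(\<And>j. j \<le> k \<Longrightarrow> fps_nth f j = fps_nth g j) \<Longrightarrow> fps_at k y f = fps_at k y g"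
  by (simp add: fps_at_def)

lemma vanishes_above_fps_at [simp]: "vanishes_above k (fps_at k y f)"
  using vanishes_above_tpow unfolding vanishes_above_def fps_at_def by simp

lemma fps_at_Nil:
  assumes "y [] = 0"
  shows "fps_at k y f [] = fps_nth f 0"
proof -
  have "(\<Sum>j\<le>k. fps_nth f j * tpow k y j []) = (\<Sum>j\<le>k. if j = 0 then fps_nth f 0 else 0)"
    by (rule sum.cong) (auto simp: tpow_Nil assms)
  then show ?thesis by (simp add: fps_at_def)
qed

lemma fps_at_one: "fps_at k y 1 = tone"
proof
  fix w
  have "(\<Sum>j\<le>k. fps_nth (1::real fps) j * tpow k y j w) = (\<Sum>j\<le>k. if j = 0 then tone w else 0)"
    by (rule sum.cong) auto
  then show "fps_at k y 1 w = tone w" by (simp add: fps_at_def)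
qed

lemma fps_at_X:
  assumes "y [] = 0" "vanishes_above k y"
  shows "fps_at k y fps_X = y"
proof
  fix w
  show "fps_at k y fps_X w = y w"
  proof (cases "k = 0")
    case True
    then show ?thesis using assms by (cases w) (auto simp: fps_at_def vanishes_above_def)
  next
    case False
    have "(\<Sum>j\<le>k. fps_nth fps_X j * tpow k y j w) = (\<Sum>j\<le>k. if j = 1 then tpow k y 1 w else 0)"
      by (rule sum.cong) (auto simp: fps_X_def)
    then show ?thesis using False assms by (simp add: fps_at_def tpow_Suc tmul_tone_right)
  qed
qed

lemma fps_at_diff: "fps_at k y (f - g) = (\<lambda>w. fps_at k y f w - fps_at k y g w)"
  by (auto simp: fps_at_def algebra_simps sum_subtractf)

lemma fps_at_sum: "fps_at k y (\<Sum>l\<in>A. F l) = (\<lambda>w. \<Sum>l\<in>A. fps_at k y (F l) w)"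
  by (auto simp: fps_at_def fps_sum_nth sum_distrib_right intro: sum.swap)

lemma fps_at_const_mult: "fps_at k y (fps_const c * f) = (\<lambda>w. c * fps_at k y f w)"
  by (auto simp: fps_at_def sum_distrib_left mult.assoc)

text \<open>Truncating f, g and f * g at degree k is harmless since y^j = 0 for j > k.\<close>
lemma fps_at_mult:
  assumes "y [] = 0"
  shows "fps_at k y (f * g) = tmul k (fps_at k y f) (fps_at k y g)"
proof
  fix w
  define h where "h i j = fps_nth f i * fps_nth g j * tpow k y (i + j) w" for i j
  have "tmul k (fps_at k y f) (fps_at k y g) w = (\<Sum>i\<le>k. \<Sum>j\<le>k. h i j)"
    unfolding fps_at_def h_def
    by (simp add: tmul_sum_left tmul_sum_right tmul_scale_left tmul_scale_right tpow_add mult_ac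
        sum_distrib_left)
  also have "\<dots> = (\<Sum>(i,j)\<in>{..k}\<times>{..k}. h i j)"
    by (simp add: sum.cartesian_product)
  also have "\<dots> = (\<Sum>(i,j)\<in>{(i,j). i + j \<le> k}. h i j)"
  proof (rule sum.mono_neutral_right)
    show "\<forall>x\<in>{..k} \<times> {..k} - {(i,j). i + j \<le> k}. (case x of (i, j) \<Rightarrow> h i j) = 0"
      by (auto simp: h_def) (metis assms not_le tpow_eq_0_nilpotent)
  qed auto
  also have "\<dots> = (\<Sum>n\<le>k. \<Sum>i\<le>n. h i (n - i))"
    by (rule sum.triangle_reindex_eq)
  also have "\<dots> = fps_at k y (f * g) w"
    unfolding fps_at_def h_def fps_mult_nth
    by (auto simp: sum_distrib_right atLeast0AtMost intro!: sum.cong)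
  finally show "fps_at k y (f * g) w = tmul k (fps_at k y f) (fps_at k y g) w" by simp
qed

lemma tpow_fps_at: "y [] = 0 \<Longrightarrow> tpow k (fps_at k y f) n = fps_at k y (f ^ n)"
  by (induction n) (simp_all add: tpow_Suc fps_at_one fps_at_mult)

lemma texp_eq_fps_at_exp: "texp k (\<lambda>w. c * y w) = fps_at k y (fps_exp c)"
  by (auto simp: texp_def fps_at_def tpow_scale intro!: sum.cong)

lemma texp_Nil: "y [] = 0 \<Longrightarrow> texp k y [] = 1"
  using texp_eq_fps_at_exp[of k 1 y] by (simp add: fps_at_Nil)

lemma vanishes_above_texp [simp]: "vanishes_above k (texp k y)"
  using texp_eq_fps_at_exp[of k 1 y] by simp

lemma tmul_texp_scale:
  assumes "y [] = 0"
  shows "tmul k (texp k (\<lambda>w. s * y w)) (texp k (\<lambda>w. t * y w)) = texp k (\<lambda>w. (s + t) * y w)"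
  by (simp add: texp_eq_fps_at_exp fps_exp_add_mult fps_at_mult[where y=y, OF assms])

lemma tpow_texp:
  assumes "y [] = 0"
  shows "tpow k (texp k y) n = texp k (\<lambda>w. real n * y w)"
  using texp_eq_fps_at_exp[of k 1 y] by (simp add: tpow_fps_at assms fps_exp_power_mult texp_eq_fps_at_exp)

lemma fps_ln_compose_nth:
  fixes G :: "real fps"
  assumes "fps_nth G 0 = 0" "j \<le> k"
  shows "fps_nth (fps_ln 1 oo G) j = (\<Sum>l\<in>{1..k}. (-1) ^ (l + 1) / real l * fps_nth (G ^ l) j)"
proof -
  have "fps_nth (fps_ln 1 oo G) j = (\<Sum>l\<in>{0..j}. fps_nth (fps_ln 1) l * fps_nth (G ^ l) j)"
    by (rule fps_compose_nth)
  also have "\<dots> = (\<Sum>l\<in>{0..k}. fps_nth (fps_ln 1) l * fps_nth (G ^ l) j)"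
    using assms startsby_zero_power_prefix[OF assms(1)]
    by (intro sum.mono_neutral_left) auto
  also have "\<dots> = (\<Sum>l\<in>{1..k}. fps_nth (fps_ln 1) l * fps_nth (G ^ l) j)"
    by (simp add: sum.atLeast_Suc_atMost)
  also have "\<dots> = (\<Sum>l\<in>{1..k}. (-1) ^ (l + 1) / real l * fps_nth (G ^ l) j)"
  proof (rule sum.cong[OF refl])
    fix l :: nat
    assume "l \<in> {1..k}"
    then obtain m where "l = Suc m" by (cases l) auto
    then show "fps_nth (fps_ln 1) l * fps_nth (G ^ l) j = (-1) ^ (l + 1) / real l * fps_nth (G ^ l) j"
      by (simp add: fps_ln_nth)
  qed
  finally show ?thesis .
qed

lemma tlog_fps_at:
  assumes "y [] = 0" "fps_nth E 0 = 1"
  shows "tlog k (fps_at k y E) = fps_at k y (fps_ln 1 oo (E - 1))"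
proof -
  have "(\<lambda>v. fps_at k y E v - tone v) = fps_at k y (E - 1)"
    by (simp add: fps_at_diff fps_at_one)
  then have "tlog k (fps_at k y E) =
      fps_at k y (\<Sum>l\<in>{1..k}. fps_const ((-1) ^ (l + 1) / real l) * (E - 1) ^ l)"
    by (simp add: tlog_def tpow_fps_at assms fps_at_sum fps_at_const_mult)
  also have "\<dots> = fps_at k y (fps_ln 1 oo (E - 1))"
    using assms by (intro fps_at_cong) (simp add: fps_sum_nth fps_ln_compose_nth)
  finally show ?thesis .
qed

lemma fps_ln_compose_exp: "fps_ln (1::real) oo (fps_exp 1 - 1) = fps_X"
  by (simp add: fps_ln_fps_exp_inv fps_inv_fps_exp_compose)

lemma tlog_texp:
  assumes "y [] = 0" "vanishes_above k y"
  shows "tlog k (texp k y) = y"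
  using texp_eq_fps_at_exp[of k 1 y] assms by (simp add: tlog_fps_at fps_ln_compose_exp fps_at_X)

lemma lie_alg_Nil: "z \<in> lie_alg d k \<Longrightarrow> z [] = 0"
  by (induction rule: lie_alg.induct) (auto simp: tletter_def tbracket_def)

lemma lie_alg_vanishes_above: "z \<in> lie_alg d k \<Longrightarrow> vanishes_above k z"
  by (induction rule: lie_alg.induct) (auto simp: tletter_def vanishes_above_def tbracket_def tmul_eq_0_above)

lemma lie_group_Nil: "m \<in> lie_group d k \<Longrightarrow> m [] = 1"
  by (auto simp: lie_group_def texp_Nil lie_alg_Nil)

lemma lie_group_vanishes_above: "m \<in> lie_group d k \<Longrightarrow> vanishes_above k m"
  by (auto simp: lie_group_def)

lemma texp_scale_in_lie_group: "z \<in> lie_alg d k \<Longrightarrow> texp k (\<lambda>w. c * z w) \<in> lie_group d k"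
  unfolding lie_group_def by (intro imageI lie_alg.smult)

lemma texp_zero: "texp k (\<lambda>w. 0) = tone"
  using texp_eq_fps_at_exp[of k 0 "\<lambda>w. 0"] by (simp add: fps_at_one)

lemma tmul_texp_neg:
  assumes "a [] = 0"
  shows "tmul k (texp k a) (texp k (\<lambda>w. - a w)) = tone"
  using tmul_texp_scale[where y=a and s=1 and t="-1", OF assms] by (simp add: texp_zero)

lemma tmul_neg_texp:
  assumes "a [] = 0"
  shows "tmul k (texp k (\<lambda>w. - a w)) (texp k a) = tone"
  using tmul_texp_scale[where y=a and s="-1" and t=1, OF assms] by (simp add: texp_zero)

lemma ginv_texp:
  assumes a: "a \<in> lie_alg d k"
  shows "ginv d k (texp k a) = texp k (\<lambda>w. - a w)"
  unfolding ginv_def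
proof (rule the_equality)
  have a0: "a [] = 0" by (rule lie_alg_Nil[OF a])
  show "texp k (\<lambda>w. - a w) \<in> lie_group d k \<and> tmul k (texp k a) (texp k (\<lambda>w. - a w)) = tone"
    using texp_scale_in_lie_group[OF a, of "-1"] tmul_texp_neg[where a=a, OF a0] by simp
  fix y
  assume y: "y \<in> lie_group d k \<and> tmul k (texp k a) y = tone"
  have "vanishes_above k y"
    using y lie_group_vanishes_above by blast
  then have "y = tmul k (tmul k (texp k (\<lambda>w. - a w)) (texp k a)) y"
    by (simp add: tmul_neg_texp[where a=a, OF a0] tmul_tone_left)
  also have "\<dots> = texp k (\<lambda>w. - a w)"
    using y by (simp flip: tmul_assoc add: tmul_tone_right)
  finally show "y = texp k (\<lambda>w. - a w)" .
qed

lemma tmul_ginv: "m \<in> lie_group d k \<Longrightarrow> tmul k m (ginv d k m) = tone"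
  unfolding lie_group_def by (auto simp: ginv_texp tmul_texp_neg lie_alg_Nil)

lemma agree_below_tmul:
  "agree_below n a a' \<Longrightarrow> agree_below n b b' \<Longrightarrow> agree_below n (tmul k a b) (tmul k a' b')"
  unfolding agree_below_def tmul_def by (auto intro!: sum.cong)

lemma agree_below_tpow: "agree_below n a a' \<Longrightarrow> agree_below n (tpow k a l) (tpow k a' l)"
  by (induction l) (simp_all add: tpow_Suc agree_below_tmul)

lemma tmul_split_ends:
  assumes "w \<noteq> []" "length w \<le> k"
  shows "tmul k a b w = a [] * b w + a w * b [] + (\<Sum>i\<in>{1..<length w}. a (take i w) * b (drop i w))"
proof -
  have "{..length w} = insert 0 (insert (length w) {1..<length w})"
    using assms(1) by auto
  then show ?thesis
    using assms by (simp add: tmul_def algebra_simps)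
qed

lemma tmul_top_level_diff:
  assumes "w \<noteq> []" "length w \<le> k" "agree_below (length w) a a'" "agree_below (length w) b b'"
  shows "tmul k a b w - tmul k a' b' w = b [] * (a w - a' w) + a [] * (b w - b' w)"
proof -
  have "(\<Sum>i\<in>{1..<length w}. a (take i w) * b (drop i w)) =
      (\<Sum>i\<in>{1..<length w}. a' (take i w) * b' (drop i w))"
    using assms(3,4) unfolding agree_below_def by (auto intro!: sum.cong)
  moreover have "a [] = a' []" "b [] = b' []"
    using assms(1,3,4) unfolding agree_below_def by auto
  ultimately show ?thesis
    using assms(1,2) by (simp add: tmul_split_ends algebra_simps)
qed

lemma tpow_top_level_diff:
  assumes "a [] = 0" "a' [] = 0" "w \<noteq> []" "length w \<le> k" "agree_below (length w) a a'"
  shows "tpow k a l w - tpow k a' l w = (if l = 1 then a w - a' w else 0)"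
proof (induction l)
  case 0
  then show ?case using assms(3) by (simp add: tone_def)
next
  case (Suc l)
  have "tpow k a (Suc l) w - tpow k a' (Suc l) w =
      tpow k a l [] * (a w - a' w) + a [] * (tpow k a l w - tpow k a' l w)"
    unfolding tpow_Suc using tmul_top_level_diff[OF assms(3-5) agree_below_tpow[OF assms(5)]] .
  then show ?case
    using assms(1) by (simp add: tpow_Nil)
qed

text \<open>Powers l \<ge> 2 of s - 1 see at the top level only the lower levels, where s and s' agree.\<close>
lemma tlog_top_level_diff:
  assumes "s [] = 1" "s' [] = 1" "w \<noteq> []" "length w \<le> k" "agree_below (length w) s s'"
  shows "tlog k s w - tlog k s' w = s w - s' w"
proof -
  define p where "p = (\<lambda>v. s v - tone v)"
  define p' where "p' = (\<lambda>v. s' v - tone v)"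
  have p0: "p [] = 0" "p' [] = 0"
    using assms(1,2) by (simp_all add: p_def p'_def tone_def)
  have "agree_below (length w) p p'"
    using assms(5) by (simp add: agree_below_def p_def p'_def)
  note diff = tpow_top_level_diff[OF p0 assms(3,4) this]
  have "tlog k s w - tlog k s' w =
      (\<Sum>l\<in>{1..k}. (-1) ^ (l + 1) / real l * (tpow k p l w - tpow k p' l w))"
    unfolding tlog_def p_def p'_def by (simp only: sum_subtractf[symmetric] right_diff_distrib)
  also have "\<dots> = (\<Sum>l\<in>{1..k}. if l = 1 then p w - p' w else 0)"
    by (intro sum.cong) (auto simp: diff)
  also have "\<dots> = s w - s' w"
    using assms(3,4) by (cases w) (auto simp: p_def p'_def)
  finally show ?thesis .
qed

lemma right_inverse_Nil: "m [] = 1 \<Longrightarrow> tmul k m I = tone \<Longrightarrow> I [] = 1"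
  by (metis mult_1 tmul_Nil tone_def)

lemma right_inverse_agree_below:
  assumes "m [] = 1" "m' [] = 1" "tmul k m I = tone" "tmul k m' I' = tone"
    and "agree_below n m m'" "n \<le> Suc k"
  shows "agree_below n I I'"
proof (rule agree_below_by_level)
  fix v :: "nat list"
  assume v: "length v < n" "agree_below (length v) I I'"
  show "I v = I' v"
  proof (cases "v = []")
    case True
    then show ?thesis using assms(1-4) right_inverse_Nil by metis
  next
    case False
    have "agree_below (length v) m m'"
      using assms(5) v(1) by (simp add: agree_below_mono)
    then have "tmul k m I v - tmul k m' I' v = I [] * (m v - m' v) + m [] * (I v - I' v)"
      using tmul_top_level_diff False v assms(6) by simp
    moreover have "m v = m' v"
      using assms(5) v(1) by (simp add: agree_below_def)
    ultimately show ?thesis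
      using assms(1-4) by simp
  qed
qed

lemma right_inverse_top_level_diff:
  assumes "m [] = 1" "m' [] = 1" "tmul k m I = tone" "tmul k m' I' = tone"
    and "w \<noteq> []" "length w \<le> k" "agree_below (length w) m m'"
  shows "I w - I' w = m' w - m w"
proof -
  have "agree_below (length w) I I'"
    using right_inverse_agree_below assms by simp
  then have "tmul k m I w - tmul k m' I' w = I [] * (m w - m' w) + m [] * (I w - I' w)"
    using tmul_top_level_diff assms(5-7) by simp
  then show ?thesis
    using assms(1-5) right_inverse_Nil[OF assms(1,3)] by (simp add: tone_def)
qed

lemma tlog_right_inverse_mult_top_level_diff:
  assumes "m [] = 1" "m' [] = 1" "tmul k m I = tone" "tmul k m' I' = tone" "x [] = 1"
    and "w \<noteq> []" "length w \<le> k" "agree_below (length w) m m'"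
  shows "tlog k (tmul k I x) w - tlog k (tmul k I' x) w = m' w - m w"
proof -
  have I0: "I [] = 1" "I' [] = 1"
    using assms(1-4) right_inverse_Nil by metis+
  have I: "agree_below (length w) I I'"
    using right_inverse_agree_below assms by simp
  have x: "agree_below (length w) x x"
    by simp
  have "tlog k (tmul k I x) w - tlog k (tmul k I' x) w = tmul k I x w - tmul k I' x w"
    using I0 assms(5-7) agree_below_tmul[OF I x] by (intro tlog_top_level_diff) simp_all
  also have "\<dots> = x [] * (I w - I' w) + I [] * (x w - x w)"
    using tmul_top_level_diff[OF assms(6,7) I x] .
  also have "\<dots> = m' w - m w"
    using right_inverse_top_level_diff[OF assms(1-4,6-8)] assms(5) I0 by simp
  finally show ?thesis .
qed

text \<open>If m and m' agree below the level of v, the two barycentre equations differ at v by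
  N (m' v - m v).\<close>
lemma bary_equation_unique:
  fixes xs :: "nat \<Rightarrow> tensor"
  assumes "0 < N" "\<And>i. i < N \<Longrightarrow> xs i [] = 1"
    and "m \<in> lie_group d k" "\<And>w. (\<Sum>i<N. tlog k (tmul k (ginv d k m) (xs i)) w) = 0"
    and "m' \<in> lie_group d k" "\<And>w. (\<Sum>i<N. tlog k (tmul k (ginv d k m') (xs i)) w) = 0"
  shows "m = m'"
proof (rule tensor_eq_by_level)
  fix v :: "nat list"
  assume agree: "agree_below (length v) m m'"
  consider "v = []" | "k < length v" | "v \<noteq> []" "length v \<le> k"
    by linarith
  then show "m v = m' v"
  proof cases
    case 1
    then show ?thesis using lie_group_Nil[OF assms(3)] lie_group_Nil[OF assms(5)] by simp
  next
    case 2
    then show ?thesis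
      using lie_group_vanishes_above[OF assms(3)] lie_group_vanishes_above[OF assms(5)]
      by (simp add: vanishes_above_def)
  next
    case 3
    have "0 = (\<Sum>i<N. tlog k (tmul k (ginv d k m) (xs i)) v) -
        (\<Sum>i<N. tlog k (tmul k (ginv d k m') (xs i)) v)"
      using assms(4,6) by simp
    also have "\<dots> = (\<Sum>i<N. m' v - m v)"
      unfolding sum_subtractf[symmetric] using 3 agree assms(2,3,5)
      by (intro sum.cong refl tlog_right_inverse_mult_top_level_diff)
        (simp_all add: lie_group_Nil[OF assms(3)] lie_group_Nil[OF assms(5)]
          tmul_ginv[OF assms(3)] tmul_ginv[OF assms(5)])
    also have "\<dots> = real N * (m' v - m v)"
      by simp
    finally show ?thesis
      using assms(1) by simp
  qed
qed

lemma bary_eqI: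
  assumes "0 < N" "\<And>i. i < N \<Longrightarrow> xs i [] = 1"
    and "m \<in> lie_group d k" "\<And>w. (\<Sum>i<N. tlog k (tmul k (ginv d k m) (xs i)) w) = 0"
  shows "bary d k N xs = m"
  unfolding bary_def
proof (rule the_equality)
  show "m \<in> lie_group d k \<and> (\<forall>w. (\<Sum>i<N. tlog k (tmul k (ginv d k m) (xs i)) w) = 0)"
    using assms(3,4) by blast
  fix m'
  assume "m' \<in> lie_group d k \<and> (\<forall>w. (\<Sum>i<N. tlog k (tmul k (ginv d k m') (xs i)) w) = 0)"
  then show "m' = m"
    using bary_equation_unique[where xs=xs, OF assms(1,2) _ _ assms(3,4)] by blast
qed

lemma tlog_ginv_tpow_mult_tpow:
  assumes z: "z \<in> lie_alg d k"
  shows "tlog k (tmul k (ginv d k (tpow k (texp k z) q)) (tpow k (texp k z) n)) =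
    (\<lambda>w. (real n - real q) * z w)"
proof -
  have pow: "tpow k (texp k z) j = texp k (\<lambda>w. real j * z w)" for j
    by (rule tpow_texp[where y=z, OF lie_alg_Nil[OF z]])
  have inv: "ginv d k (tpow k (texp k z) q) = texp k (\<lambda>w. (- real q) * z w)"
    unfolding pow using ginv_texp[OF lie_alg.smult[OF z]] by simp
  have "tmul k (ginv d k (tpow k (texp k z) q)) (tpow k (texp k z) n) =
      texp k (\<lambda>w. (- real q + real n) * z w)"
    unfolding inv unfolding pow by (rule tmul_texp_scale[where y=z, OF lie_alg_Nil[OF z]])
  moreover have "tlog k (texp k (\<lambda>w. c * z w)) = (\<lambda>w. c * z w)" for c
    using tlog_texp[OF lie_alg_Nil lie_alg_vanishes_above, OF lie_alg.smult[OF z] lie_alg.smult[OF z]] .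
  ultimately show ?thesis
    by simp
qed

theorem proposition4p5:
  fixes d k N :: nat and x :: tensor and u :: "nat \<Rightarrow> nat"
  assumes "0 < N"
    and "x \<in> lie_group d k"
    and "N dvd (\<Sum>i<N. u i)"
  shows "bary d k N (\<lambda>i. tpow k x (u i)) = tpow k x ((\<Sum>i<N. u i) div N)"
proof -
  obtain z where z: "z \<in> lie_alg d k" and x: "x = texp k z"
    using assms(2) by (auto simp: lie_group_def)
  have pow_in_group: "tpow k x n \<in> lie_group d k" for n
    unfolding x tpow_texp[where y=z, OF lie_alg_Nil[OF z]] by (rule texp_scale_in_lie_group[OF z])
  define q where "q = (\<Sum>i<N. u i) div N"
  have "(\<Sum>i<N. real (u i)) = real N * real q"
    using assms(3) by (simp add: q_def flip: of_nat_sum of_nat_mult)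
  then have "(\<Sum>i<N. tlog k (tmul k (ginv d k (tpow k x q)) (tpow k x (u i))) w) = 0" for w
    unfolding x by (simp add: tlog_ginv_tpow_mult_tpow[OF z] sum_subtractf flip: sum_distrib_right)
  moreover have "tpow k x n [] = 1" for n
    using lie_group_Nil[OF pow_in_group] .
  ultimately show ?thesis
    unfolding q_def[symmetric] using assms(1) pow_in_group by (intro bary_eqI)
qed

end
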